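(* Let $(\mathbf{X},\mathbf{A})\sim \textsf{CSBM}(n,p,q,\boldsymbol{\mu},\sigma^2)$. Let $\Psi$ be the attention architecture $$\Psi(\mathbf{X}_i,\mathbf{X}_j)=\boldsymbol{r}^T\,\mathrm{LeakyRelu}\!\left(\mathbf{S}\begin{bmatrix}\tilde{\boldsymbol{w}}^T\mathbf{X}_i\\ \tilde{\boldsymbol{w}}^T\mathbf{X}_j\end{bmatrix}\right),\quad \tilde{\boldsymbol{w}}=\frac{\boldsymbol{\mu}}{\|\boldsymbol{\mu}\|},\quad \mathbf{S}=\begin{bmatrix}1&1\\-1&-1\\1&-1\\-1&1\end{bmatrix},\quad \boldsymbol{r}=R\begin{bmatrix}1\\1\\-1\\-1\end{bmatrix},$$ with $R=\Omega(n\log^2 n/\sigma)$, let $\gamma_{ij}=\exp(\Psi(\mathbf{X}_i,\mathbf{X}_j))/\sum_{\ell\in N_i}\exp(\Psi(\mathbf{X}_i,\mathbf{X}_\ell))$ and $h_i'=\sum_{j\in N_i}\gamma_{ij}\tilde{\boldsymbol{w}}^T\mathbf{X}_j$. Then with probability at least $1-o(1)$ over the data, for all $i\in[n]$: $h_i'>0$ if and only if $\tilde{\boldsymbol{w}}^T\mathbf{X}_i>0$, and $h_i'<0$ if and only if $\tilde{\boldsymbol{w}}^T\mathbf{X}_i<0$.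
   Context: CSBM: fix $n,d\in\mathbb{N}$, $\boldsymbol{\mu}\in\mathbb{R}^d\setminus\{0\}$, $\sigma>0$, $p,q\in[0,1]$. Draw $\epsilon_1,\dots,\epsilon_n$ i.i.d. Bernoulli$(1/2)$, classes $C_k=\{j:\epsilon_j=k\}$. Independently $\mathbf{X}_i\sim N((2\epsilon_i-1)\boldsymbol{\mu},\sigma^2\mathbf{I})$. Adjacency entries $a_{ij}\sim\mathrm{Ber}(p)$ if $i,j$ are in the same class and $\mathrm{Ber}(q)$ otherwise; $N_i$ is the set of neighbors of $i$ together with $i$ itself. $\mathrm{LeakyRelu}(x)=x$ for $x\ge0$ and $\beta x$ for $x<0$, with fixed $\beta\in[0,1)$, applied entrywise. Asymptotic notation refers to $n\to\infty$, parameters may depend on $n$. *)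

theory Defs
  imports "HOL-Probability.Probability"
begin

text \<open>Vectors in R^d are functions nat => real, only entries k < d matter.
  Feature matrix X : nat => nat => real (X i k = k-th coordinate of X_i, i < n, k < d).
  Graph: one Bernoulli variable per unordered pair {i,j}, i < j < n (undirected graph).\<close>

definition csbm_features ::
  "nat \<Rightarrow> nat \<Rightarrow> (nat \<Rightarrow> real) \<Rightarrow> real \<Rightarrow> (nat \<Rightarrow> bool) \<Rightarrow> (nat \<Rightarrow> nat \<Rightarrow> real) measure" where
  "csbm_features n d \<mu> \<sigma> \<epsilon> =
     PiM {..<n} (\<lambda>i. PiM {..<d}
       (\<lambda>k. density lborel (normal_density ((if \<epsilon> i then 1 else -1) * \<mu> k) \<sigma>)))"

definition csbm_graph ::
  "nat \<Rightarrow> real \<Rightarrow> real \<Rightarrow> (nat \<Rightarrow> bool) \<Rightarrow> (nat \<times> nat \<Rightarrow> bool) measure" where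
  "csbm_graph n p q \<epsilon> =
     PiM {(i, j). i < j \<and> j < n}
       (\<lambda>(i, j). measure_pmf (bernoulli_pmf (if \<epsilon> i = \<epsilon> j then p else q)))"

text \<open>The law of the data (X, A): the class labels eps_1..eps_n are i.i.d. Bernoulli(1/2),
  i.e. uniform on {..<n} ->E bool; conditionally on them, features and edges are independent.\<close>
definition CSBM ::
  "nat \<Rightarrow> nat \<Rightarrow> (nat \<Rightarrow> real) \<Rightarrow> real \<Rightarrow> real \<Rightarrow> real
     \<Rightarrow> ((nat \<Rightarrow> nat \<Rightarrow> real) \<times> (nat \<times> nat \<Rightarrow> bool)) measure" where
  "CSBM n d \<mu> \<sigma> p q =
     Giry_Monad.bind (measure_pmf (pmf_of_set ({..<n} \<rightarrow>\<^sub>E (UNIV :: bool set))))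
       (\<lambda>\<epsilon>. csbm_features n d \<mu> \<sigma> \<epsilon> \<Otimes>\<^sub>M csbm_graph n p q \<epsilon>)"

definition csbm_adj :: "(nat \<times> nat \<Rightarrow> bool) \<Rightarrow> nat \<Rightarrow> nat \<Rightarrow> bool" where
  "csbm_adj A i j = (i \<noteq> j \<and> (if i < j then A (i, j) else A (j, i)))"

definition nbhd :: "nat \<Rightarrow> (nat \<times> nat \<Rightarrow> bool) \<Rightarrow> nat \<Rightarrow> nat set" where
  "nbhd n A i = {j. j < n \<and> (j = i \<or> csbm_adj A i j)}"

definition leaky_relu :: "real \<Rightarrow> real \<Rightarrow> real" where
  "leaky_relu \<beta> x = (if x \<ge> 0 then x else \<beta> * x)"

definition vnorm :: "nat \<Rightarrow> (nat \<Rightarrow> real) \<Rightarrow> real" where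
  "vnorm d v = sqrt (\<Sum>k<d. (v k)\<^sup>2)"

definition w_tilde :: "nat \<Rightarrow> (nat \<Rightarrow> real) \<Rightarrow> nat \<Rightarrow> real" where
  "w_tilde d \<mu> = (\<lambda>k. \<mu> k / vnorm d \<mu>)"

definition inner_d :: "nat \<Rightarrow> (nat \<Rightarrow> real) \<Rightarrow> (nat \<Rightarrow> real) \<Rightarrow> real" where
  "inner_d d w x = (\<Sum>k<d. w k * x k)"

definition S_mat :: "nat \<Rightarrow> nat \<Rightarrow> real" where
  "S_mat m c = [[1, 1], [-1, -1], [1, -1], [-1, 1]] ! m ! c"

definition r_vec :: "real \<Rightarrow> nat \<Rightarrow> real" where
  "r_vec R m = R * [1, 1, -1, -1] ! m"

definition Psi :: "real \<Rightarrow> real \<Rightarrow> real \<Rightarrow> real \<Rightarrow> real" where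
  "Psi \<beta> R a b = (\<Sum>m<4. r_vec R m * leaky_relu \<beta> (S_mat m 0 * a + S_mat m 1 * b))"

definition gat_score ::
  "real \<Rightarrow> real \<Rightarrow> nat \<Rightarrow> (nat \<Rightarrow> real) \<Rightarrow> (nat \<Rightarrow> nat \<Rightarrow> real) \<Rightarrow> nat \<Rightarrow> nat \<Rightarrow> real" where
  "gat_score \<beta> R d \<mu> X i j =
     Psi \<beta> R (inner_d d (w_tilde d \<mu>) (X i)) (inner_d d (w_tilde d \<mu>) (X j))"

definition gat_gamma ::
  "real \<Rightarrow> real \<Rightarrow> nat \<Rightarrow> nat \<Rightarrow> (nat \<Rightarrow> real) \<Rightarrow> (nat \<Rightarrow> nat \<Rightarrow> real)
     \<Rightarrow> (nat \<times> nat \<Rightarrow> bool) \<Rightarrow> nat \<Rightarrow> nat \<Rightarrow> real" where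
  "gat_gamma \<beta> R n d \<mu> X A i j =
     exp (gat_score \<beta> R d \<mu> X i j) / (\<Sum>l\<in>nbhd n A i. exp (gat_score \<beta> R d \<mu> X i l))"

definition gat_out ::
  "real \<Rightarrow> real \<Rightarrow> nat \<Rightarrow> nat \<Rightarrow> (nat \<Rightarrow> real) \<Rightarrow> (nat \<Rightarrow> nat \<Rightarrow> real)
     \<Rightarrow> (nat \<times> nat \<Rightarrow> bool) \<Rightarrow> nat \<Rightarrow> real" where
  "gat_out \<beta> R n d \<mu> X A i =
     (\<Sum>j\<in>nbhd n A i. gat_gamma \<beta> R n d \<mu> X A i j * inner_d d (w_tilde d \<mu>) (X j))"

end

theory Submission
  imports Defs "HOL-Real_Asymp.Real_Asymp"
begin

(* Write a_j for the projection of X_j on w~ and rho = R (1 - beta).  The score is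
   Psi(a_i, a_j) = rho (|a_i + a_j| - |a_i - a_j|) = 2 rho sgn(a_i) sgn(a_j) min(|a_i|, |a_j|),
   so node i gives itself the largest weight exp(2 rho |a_i|), while a neighbour of the opposite sign
   gets weight exp(-2 rho min(|a_i|, |a_j|)).  Hence h_i' has the sign of a_i as soon as all |a_j| are
   at least delta and within a factor C of each other, 2 rho delta >= 1 and exp(2 rho delta) > n C.
   Whatever the graph, each a_j is Gaussian with mean +-||mu|| and variance sigma^2, so
   anticoncentration, Chebyshev's inequality and a union bound give this event probability at least
   1 - n (2 delta / sigma + 1 / t^2), where t measures the allowed deviation of |a_j| from ||mu|| in
   units of sigma.  For delta = sigma / (n sqrt (log n)) and t = n this is 1 - o(1), and
   R = Omega(n log^2 n / sigma) makes rho delta of order log^(3/2) n, which beats log (n C) = O(log n). *)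

section \<open>Attention scores\<close>

lemma leaky_relu_add_neg: "leaky_relu \<beta> x + leaky_relu \<beta> (-x) = (1 - \<beta>) * \<bar>x\<bar>"
  by (auto simp: leaky_relu_def algebra_simps)

lemma Psi_eq: "Psi \<beta> R a b = R * (1 - \<beta>) * (\<bar>a + b\<bar> - \<bar>a - b\<bar>)"
proof -
  have "Psi \<beta> R a b = R * (leaky_relu \<beta> (a + b) + leaky_relu \<beta> (-(a + b)))
      - R * (leaky_relu \<beta> (a - b) + leaky_relu \<beta> (-(a - b)))"
    by (simp add: Psi_def eval_nat_numeral S_mat_def r_vec_def algebra_simps)
  then show ?thesis
    by (simp only: leaky_relu_add_neg) (simp add: algebra_simps)
qed

definition attention_weight :: "real \<Rightarrow> real \<Rightarrow> real \<Rightarrow> real" where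
  "attention_weight \<rho> a b = exp (\<rho> * (\<bar>a + b\<bar> - \<bar>a - b\<bar>))"

lemma attention_weight_pos: "attention_weight \<rho> a b > 0"
  by (simp add: attention_weight_def)

lemma attention_weight_uminus: "attention_weight \<rho> (-a) (-b) = attention_weight \<rho> a b"
  by (simp add: attention_weight_def abs_minus_commute add.commute)

lemma attention_weight_self: "a \<ge> 0 \<Longrightarrow> attention_weight \<rho> a a = exp (2 * \<rho> * a)"
  by (simp add: attention_weight_def)

lemma nbhd_subset: "nbhd n A i \<subseteq> {..<n}"
  by (auto simp: nbhd_def)

lemma finite_nbhd: "finite (nbhd n A i)"
  using nbhd_subset by (rule finite_subset) simp

lemma card_nbhd_le: "card (nbhd n A i) \<le> n"
  using card_mono[OF _ nbhd_subset] by simp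

lemma self_in_nbhd: "i < n \<Longrightarrow> i \<in> nbhd n A i"
  by (simp add: nbhd_def)

lemma gat_out_eq:
  fixes X :: "nat \<Rightarrow> nat \<Rightarrow> real" and \<mu> :: "nat \<Rightarrow> real" and d :: nat
  defines "a \<equiv> \<lambda>j. inner_d d (w_tilde d \<mu>) (X j)"
  shows "gat_out \<beta> R n d \<mu> X A i =
    (\<Sum>j\<in>nbhd n A i. attention_weight (R * (1 - \<beta>)) (a i) (a j) * a j) /
    (\<Sum>j\<in>nbhd n A i. attention_weight (R * (1 - \<beta>)) (a i) (a j))"
  unfolding gat_out_def gat_gamma_def gat_score_def Psi_eq attention_weight_def a_def
  by (simp add: sum_divide_distrib[symmetric] mult.assoc)

lemma attention_weight_opposite_sign:
  assumes "0 \<le> a" "b \<le> 0"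
  shows "attention_weight \<rho> a b = exp (- (2 * \<rho> * min a (- b)))"
proof -
  have "\<bar>a + b\<bar> - \<bar>a - b\<bar> = - (2 * min a (- b))"
    using assms by (auto simp: min_def abs_if)
  then have "\<rho> * (\<bar>a + b\<bar> - \<bar>a - b\<bar>) = - (2 * \<rho> * min a (- b))"
    by (simp only:)
  then show ?thesis unfolding attention_weight_def by (simp only:)
qed

lemma mult_exp_neg_le:
  fixes \<rho> c :: real
  assumes "\<rho> > 0"
  shows "c * exp (- (2 * \<rho> * c)) \<le> 1 / (2 * \<rho>)"
proof -
  have "2 * \<rho> * c \<le> exp (2 * \<rho> * c)"
    using exp_ge_add_one_self[of "2 * \<rho> * c"] by linarith
  then show ?thesis using assms by (simp add: exp_minus field_simps)
qed

(* The bound is a 1/n fraction of node i's own term attention_weight rho a a * a, so the other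
   neighbours together cannot cancel that term. *)
lemma attention_weight_mult_ge:
  fixes a b \<rho> \<delta> C :: real and n :: nat
  assumes "\<rho> > 0" "0 < \<delta>" "\<delta> \<le> a" "\<bar>b\<bar> \<le> C * a" "C \<ge> 1" "n \<ge> 1"
    and "1 \<le> 2 * \<rho> * \<delta>" "n * C < exp (2 * \<rho> * \<delta>)"
  shows "attention_weight \<rho> a b * b \<ge> - (a * exp (2 * \<rho> * a) / n)"
proof -
  have "2 * \<rho> * \<delta> \<le> 2 * \<rho> * a" using assms by simp
  then have "1 \<le> 2 * \<rho> * a" "n * C < exp (2 * \<rho> * a)"
    using assms(7,8) exp_le_cancel_iff[of "2 * \<rho> * \<delta>" "2 * \<rho> * a"] by linarith+
  consider "b \<ge> 0" | "b < 0" "a \<le> - b" | "b < 0" "- b < a" by linarith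
  then show ?thesis
  proof cases
    case 1
    then have "0 \<le> attention_weight \<rho> a b * b"
      using attention_weight_pos[of \<rho> a b] by simp
    moreover have "0 \<le> a * exp (2 * \<rho> * a) / n" using assms by simp
    ultimately show ?thesis by linarith
  next
    case 2
    have "attention_weight \<rho> a b * (- b) = (- b) * exp (- (2 * \<rho> * a))"
      using 2 assms by (simp add: attention_weight_opposite_sign min_def)
    also have "\<dots> \<le> C * a * exp (- (2 * \<rho> * a))"
      using assms by (intro mult_right_mono) auto
    also have "\<dots> \<le> a * exp (2 * \<rho> * a) / n"
    proof -
      have "exp (2 * \<rho> * a) \<le> exp (2 * \<rho> * a) * exp (2 * \<rho> * a)"
        using \<open>1 \<le> 2 * \<rho> * a\<close> by simp
      then have "n * C \<le> exp (2 * \<rho> * a) * exp (2 * \<rho> * a)"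
        using \<open>n * C < exp (2 * \<rho> * a)\<close> by linarith
      then show ?thesis using assms by (simp add: exp_minus field_simps mult_left_mono)
    qed
    finally show ?thesis by simp
  next
    case 3
    have "attention_weight \<rho> a b * (- b) = (- b) * exp (- (2 * \<rho> * (- b)))"
      using 3 assms by (simp add: attention_weight_opposite_sign min_def)
    also have "\<dots> \<le> 1 / (2 * \<rho>)"
      using \<open>\<rho> > 0\<close> by (rule mult_exp_neg_le)
    also have "\<dots> \<le> a * exp (2 * \<rho> * a) / n"
    proof -
      have "real n * 1 \<le> real n * C" using assms by (intro mult_left_mono) auto
      then have "1 * real n \<le> (2 * \<rho> * a) * exp (2 * \<rho> * a)"
        using \<open>1 \<le> 2 * \<rho> * a\<close> \<open>n * C < exp (2 * \<rho> * a)\<close> by (intro mult_mono) auto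
      then show ?thesis using assms by (simp add: field_simps)
    qed
    finally show ?thesis by simp
  qed
qed

lemma attention_sum_pos:
  fixes a :: "nat \<Rightarrow> real" and N :: "nat set" and \<rho> \<delta> C :: real and n :: nat
  assumes "finite N" "i \<in> N" "card N \<le> n"
    and "\<rho> > 0" "0 < \<delta>" "\<delta> \<le> a i" "\<forall>j\<in>N. \<bar>a j\<bar> \<le> C * a i" "C \<ge> 1"
    and "1 \<le> 2 * \<rho> * \<delta>" "n * C < exp (2 * \<rho> * \<delta>)"
  shows "0 < (\<Sum>j\<in>N. attention_weight \<rho> (a i) (a j) * a j)"
proof -
  define x where "x = a i * exp (2 * \<rho> * a i)"
  have "x > 0" using assms by (simp add: x_def)
  have "card N \<ge> 1" using assms(1,2) by (auto simp: Suc_le_eq card_gt_0_iff)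
  then have "n \<ge> 1" "card N - 1 < n" using assms(3) by linarith+
  have "0 < x - real (card N - 1) * (x / n)"
  proof -
    have "real (card N - 1) * (x / n) < n * (x / n)"
      using \<open>x > 0\<close> \<open>card N - 1 < n\<close> by (intro mult_strict_right_mono) auto
    then show ?thesis using \<open>n \<ge> 1\<close> by simp
  qed
  also have "\<dots> = x + (\<Sum>j\<in>N - {i}. - (x / n))"
    using assms(1,2) by simp
  also have "\<dots> \<le> x + (\<Sum>j\<in>N - {i}. attention_weight \<rho> (a i) (a j) * a j)"
  proof (intro add_left_mono sum_mono)
    fix j assume "j \<in> N - {i}"
    then show "- (x / n) \<le> attention_weight \<rho> (a i) (a j) * a j"
      using attention_weight_mult_ge[of \<rho> \<delta> "a i" "a j" C n] assms \<open>n \<ge> 1\<close>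
      by (simp add: x_def)
  qed
  also have "\<dots> = (\<Sum>j\<in>N. attention_weight \<rho> (a i) (a j) * a j)"
    using assms(1,2,5,6) by (simp add: sum.remove attention_weight_self x_def)
  finally show ?thesis .
qed

lemma gat_out_sign:
  fixes X :: "nat \<Rightarrow> nat \<Rightarrow> real" and \<mu> :: "nat \<Rightarrow> real" and d :: nat and C :: real
  defines "a \<equiv> \<lambda>j. inner_d d (w_tilde d \<mu>) (X j)"
  assumes "i < n" "R > 0" "\<beta> < 1" "0 < \<delta>" "\<forall>j<n. \<delta> \<le> \<bar>a j\<bar>"
    and "\<forall>j<n. \<bar>a j\<bar> \<le> C * \<bar>a i\<bar>" "C \<ge> 1"
    and "1 \<le> 2 * (R * (1 - \<beta>)) * \<delta>" "n * C < exp (2 * (R * (1 - \<beta>)) * \<delta>)"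
  shows "sgn (gat_out \<beta> R n d \<mu> X A i) = sgn (a i)"
proof -
  define N where "N = nbhd n A i"
  define \<rho> where "\<rho> = R * (1 - \<beta>)"
  have N: "finite N" "i \<in> N" "card N \<le> n" "\<forall>j\<in>N. j < n"
    using finite_nbhd card_nbhd_le self_in_nbhd[OF \<open>i < n\<close>] nbhd_subset[of n A i]
    by (auto simp: N_def)
  have "\<rho> > 0" using assms by (simp add: \<rho>_def)
  have out: "gat_out \<beta> R n d \<mu> X A i =
      (\<Sum>j\<in>N. attention_weight \<rho> (a i) (a j) * a j) / (\<Sum>j\<in>N. attention_weight \<rho> (a i) (a j))"
    unfolding a_def N_def \<rho>_def by (rule gat_out_eq)
  have "0 < (\<Sum>j\<in>N. attention_weight \<rho> (a i) (a j))"
    using N by (intro sum_pos attention_weight_pos) auto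
  moreover have "sgn (\<Sum>j\<in>N. attention_weight \<rho> (a i) (a j) * a j) = sgn (a i)"
  proof (cases "a i > 0")
    case True
    have "0 < (\<Sum>j\<in>N. attention_weight \<rho> (a i) (a j) * a j)"
      using N assms \<open>\<rho> > 0\<close> True unfolding \<rho>_def by (intro attention_sum_pos) auto
    then show ?thesis using True by simp
  next
    case False
    then have "a i < 0" using assms by force
    have "0 < (\<Sum>j\<in>N. attention_weight \<rho> (- a i) (- a j) * (- a j))"
      using N assms \<open>\<rho> > 0\<close> \<open>a i < 0\<close> unfolding \<rho>_def
      by (intro attention_sum_pos[where a = "\<lambda>j. - a j"]) auto
    then show ?thesis
      using \<open>a i < 0\<close> by (simp add: attention_weight_uminus sum_negf)
  qed
  ultimately show ?thesis using out by simp
qed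

section \<open>Gaussian projections\<close>

lemma indep_vars_PiM_components:
  fixes M :: "'i \<Rightarrow> real measure"
  assumes "finite I" "I \<noteq> {}" "\<And>i. i \<in> I \<Longrightarrow> prob_space (M i)"
    and sets_M: "\<And>i. i \<in> I \<Longrightarrow> sets (M i) = sets borel"
  shows "prob_space.indep_vars (PiM I M) (\<lambda>_. borel) (\<lambda>i x. x i) I"
proof -
  interpret prob_space "PiM I M" using assms by (intro prob_space_PiM) auto
  have component: "(\<lambda>x. x i) \<in> measurable (PiM I M) (M i)" if "i \<in> I" for i
    using that by (rule measurable_component_singleton)
  have distr_component: "distr (PiM I M) borel (\<lambda>x. x i) = M i" if "i \<in> I" for i
  proof -
    have "distr (PiM I M) borel (\<lambda>x. x i) = distr (PiM I M) (M i) (\<lambda>x. x i)"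
      using that sets_M by (intro distr_cong) auto
    also have "\<dots> = M i" using assms that by (intro distr_PiM_component) auto
    finally show ?thesis .
  qed
  show ?thesis
  proof (subst indep_vars_iff_distr_eq_PiM')
    show "random_variable borel (\<lambda>x. x i)" if "i \<in> I" for i
      using component[OF that] measurable_cong_sets[OF refl sets_M[OF that]] by blast
    have "distr (PiM I M) (PiM I (\<lambda>_. borel)) (\<lambda>x. \<lambda>i\<in>I. x i) = distr (PiM I M) (PiM I M) (\<lambda>x. x)"
      using sets_M by (intro distr_cong sets_PiM_cong) (auto simp: space_PiM PiE_def extensional_restrict)
    also have "\<dots> = PiM I (\<lambda>i. distr (PiM I M) borel (\<lambda>x. x i))"
      by (simp add: distr_component cong: PiM_cong)
    finally show "distr (PiM I M) (PiM I (\<lambda>_. borel)) (\<lambda>x. \<lambda>i\<in>I. x i)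
        = PiM I (\<lambda>i. distr (PiM I M) borel (\<lambda>x. x i))" .
  qed (use assms in auto)
qed

lemma distributed_PiM_normal_component:
  assumes "k \<in> I" "\<And>i. i \<in> I \<Longrightarrow> \<sigma> i > 0"
  shows "distributed (PiM I (\<lambda>i. density lborel (normal_density (\<nu> i) (\<sigma> i)))) lborel
           (\<lambda>x. x k) (normal_density (\<nu> k) (\<sigma> k))"
proof -
  define M where "M = PiM I (\<lambda>i. density lborel (normal_density (\<nu> i) (\<sigma> i)))"
  have "distr M lborel (\<lambda>x. x k) = distr M (density lborel (normal_density (\<nu> k) (\<sigma> k))) (\<lambda>x. x k)"
    by (intro distr_cong) auto
  also have "\<dots> = density lborel (normal_density (\<nu> k) (\<sigma> k))"
    unfolding M_def using assms by (intro distr_PiM_component prob_space_normal_density) auto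
  finally have "distr M lborel (\<lambda>x. x k) = density lborel (normal_density (\<nu> k) (\<sigma> k))" .
  moreover have "(\<lambda>x. x k) \<in> borel_measurable M"
    using measurable_component_singleton[OF \<open>k \<in> I\<close>, of "\<lambda>i. density lborel (normal_density (\<nu> i) (\<sigma> i))"]
    unfolding M_def by simp
  ultimately show ?thesis
    unfolding distributed_def M_def by simp
qed

lemma distributed_inner_normal:
  fixes w \<nu> :: "nat \<Rightarrow> real"
  assumes "\<sigma> > 0" "\<exists>k<d. w k \<noteq> 0"
  defines "M \<equiv> PiM {..<d} (\<lambda>k. density lborel (normal_density (\<nu> k) \<sigma>))"
  shows "distributed M lborel (inner_d d w) (normal_density (inner_d d w \<nu>) (\<sigma> * vnorm d w))"
proof -
  interpret prob_space M
    unfolding M_def using \<open>\<sigma> > 0\<close> by (intro prob_space_PiM prob_space_normal_density)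
  define J where "J = {k. k < d \<and> w k \<noteq> 0}"
  have J: "finite J" "J \<noteq> {}" "J \<subseteq> {..<d}" using assms by (auto simp: J_def)
  have sum_J: "(\<Sum>k\<in>J. f k) = (\<Sum>k<d. f k)" if "\<And>k. w k = 0 \<Longrightarrow> f k = 0" for f :: "nat \<Rightarrow> real"
    using that by (intro sum.mono_neutral_left) (auto simp: J_def)
  have "indep_vars (\<lambda>_. borel) (\<lambda>k x. x k) {..<d}"
    unfolding M_def using J \<open>\<sigma> > 0\<close>
    by (intro indep_vars_PiM_components prob_space_normal_density) auto
  then have "indep_vars (\<lambda>_. borel) (\<lambda>k x. w k * x k) J"
    by (intro indep_vars_compose2[OF indep_vars_subset[OF _ J(3)]]) auto
  moreover have "distributed M lborel (\<lambda>x. w k * x k) (normal_density (w k * \<nu> k) (\<bar>w k\<bar> * \<sigma>))"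
    if "k \<in> J" for k
    using normal_density_affine[where \<beta> = 0 and \<alpha> = "w k"] that J \<open>\<sigma> > 0\<close>
      distributed_PiM_normal_component[of k "{..<d}" "\<lambda>_. \<sigma>" \<nu>]
    by (auto simp: M_def J_def)
  ultimately have "distributed M lborel (\<lambda>x. \<Sum>k\<in>J. w k * x k)
      (normal_density (\<Sum>k\<in>J. w k * \<nu> k) (sqrt (\<Sum>k\<in>J. (\<bar>w k\<bar> * \<sigma>)\<^sup>2)))"
    using J \<open>\<sigma> > 0\<close> by (intro sum_indep_normal) (auto simp: J_def)
  moreover have "(\<lambda>x. \<Sum>k\<in>J. w k * x k) = inner_d d w" "(\<Sum>k\<in>J. w k * \<nu> k) = inner_d d w \<nu>"
    by (simp_all add: fun_eq_iff inner_d_def sum_J)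
  moreover have "sqrt (\<Sum>k\<in>J. (\<bar>w k\<bar> * \<sigma>)\<^sup>2) = \<sigma> * vnorm d w"
    using \<open>\<sigma> > 0\<close> by (simp add: sum_J power_mult_distrib vnorm_def real_sqrt_mult
        sum_distrib_right[symmetric])
  ultimately show ?thesis by simp
qed

lemma vnorm_pos: "\<exists>k<d. \<mu> k \<noteq> 0 \<Longrightarrow> vnorm d \<mu> > 0"
  unfolding vnorm_def by (auto intro!: sum_pos2)

lemma vnorm_nonneg: "vnorm d \<mu> \<ge> 0"
  by (simp add: vnorm_def sum_nonneg)

lemma vnorm_w_tilde: "\<exists>k<d. \<mu> k \<noteq> 0 \<Longrightarrow> vnorm d (w_tilde d \<mu>) = 1"
  using vnorm_pos[of d \<mu>]
  by (simp add: vnorm_def w_tilde_def power_divide sum_divide_distrib[symmetric] sum_nonneg)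

lemma inner_w_tilde_scaled_self:
  "\<exists>k<d. \<mu> k \<noteq> 0 \<Longrightarrow> inner_d d (w_tilde d \<mu>) (\<lambda>k. s * \<mu> k) = s * vnorm d \<mu>"
  using vnorm_pos[of d \<mu>]
  by (simp add: inner_d_def w_tilde_def vnorm_def sum_divide_distrib[symmetric]
      sum_distrib_left[symmetric] power2_eq_square[symmetric] sum_nonneg field_simps)

lemma distributed_inner_w_tilde:
  assumes "\<sigma> > 0" "\<exists>k<d. \<mu> k \<noteq> 0"
  shows "distributed (PiM {..<d} (\<lambda>k. density lborel (normal_density (s * \<mu> k) \<sigma>))) lborel
           (inner_d d (w_tilde d \<mu>)) (normal_density (s * vnorm d \<mu>) \<sigma>)"
proof -
  have "\<exists>k<d. w_tilde d \<mu> k \<noteq> 0"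
    using assms vnorm_pos[of d \<mu>] by (auto simp: w_tilde_def)
  from distributed_inner_normal[OF \<open>\<sigma> > 0\<close> this, of "\<lambda>k. s * \<mu> k"] show ?thesis
    using assms by (simp add: vnorm_w_tilde inner_w_tilde_scaled_self)
qed

lemma normal_density_le_inverse: "\<sigma> > 0 \<Longrightarrow> normal_density m \<sigma> x \<le> 1 / \<sigma>"
proof -
  assume "\<sigma> > 0"
  have "\<sigma> \<le> sqrt (2 * pi) * \<sigma>"
    using pi_gt3 \<open>\<sigma> > 0\<close> by (intro mult_le_cancel_right1[THEN iffD2]) auto
  also have "\<dots> = sqrt (2 * pi * \<sigma>\<^sup>2)"
    using \<open>\<sigma> > 0\<close> by (simp add: real_sqrt_mult)
  finally have "1 / sqrt (2 * pi * \<sigma>\<^sup>2) \<le> 1 / \<sigma>"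
    using \<open>\<sigma> > 0\<close> by (intro divide_left_mono) auto
  moreover have "normal_density m \<sigma> x \<le> 1 / sqrt (2 * pi * \<sigma>\<^sup>2)"
    by (simp add: normal_density_def divide_right_mono)
  ultimately show ?thesis by linarith
qed

lemma (in prob_space) normal_prob_abs_less_le:
  assumes "distributed M lborel Y (normal_density \<nu> \<sigma>)" "\<sigma> > 0" "\<delta> > 0"
  shows "prob {x \<in> space M. \<bar>Y x\<bar> < \<delta>} \<le> 2 * \<delta> / \<sigma>"
proof -
  have [measurable]: "Y \<in> borel_measurable M"
    using distributed_measurable[OF assms(1)] by simp
  have "{x \<in> space M. \<bar>Y x\<bar> < \<delta>} = Y -` {-\<delta><..<\<delta>} \<inter> space M" by auto
  then have "emeasure M {x \<in> space M. \<bar>Y x\<bar> < \<delta>}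
      = emeasure (density lborel (normal_density \<nu> \<sigma>)) {-\<delta><..<\<delta>}"
    using distributed_distr_eq_density[OF assms(1)] emeasure_distr[of Y M lborel "{-\<delta><..<\<delta>}"]
    by simp
  also have "\<dots> = (\<integral>\<^sup>+x. ennreal (normal_density \<nu> \<sigma> x) * indicator {-\<delta><..<\<delta>} x \<partial>lborel)"
    by (subst emeasure_density) auto
  also have "\<dots> \<le> (\<integral>\<^sup>+x. ennreal (1 / \<sigma>) * indicator {-\<delta><..<\<delta>} x \<partial>lborel)"
    using normal_density_le_inverse[OF \<open>\<sigma> > 0\<close>]
    by (intro nn_integral_mono mult_right_mono ennreal_leI) auto
  also have "\<dots> = ennreal (2 * \<delta> / \<sigma>)"
    using assms by (simp add: nn_integral_cmult_indicator ennreal_mult[symmetric])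
  finally show ?thesis
    using assms by (simp add: emeasure_eq_measure)
qed

lemma (in prob_space) normal_prob_abs_diff_ge_le:
  assumes "distributed M lborel Y (normal_density \<nu> \<sigma>)" "\<sigma> > 0" "t > 0"
  shows "prob {x \<in> space M. \<sigma> * t \<le> \<bar>Y x - \<nu>\<bar>} \<le> 1 / t\<^sup>2"
proof -
  have centered: "distributed M lborel (\<lambda>x. Y x - \<nu>) (normal_density 0 \<sigma>)"
    using normal_density_affine[OF assms(1,2), of 1 "- \<nu>"] by simp
  have [measurable]: "Y \<in> borel_measurable M"
    using distributed_measurable[OF assms(1)] by simp
  have "integrable M (\<lambda>x. (Y x - \<nu>)\<^sup>2)"
    using distributed_integrable[OF centered, of "\<lambda>x. x\<^sup>2"]
      integrable_normal_moment[OF \<open>\<sigma> > 0\<close>, of 0 2] by simp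
  then have "prob {x \<in> space M. \<sigma> * t \<le> \<bar>(Y x - \<nu>) - expectation (\<lambda>x. Y x - \<nu>)\<bar>}
      \<le> variance (\<lambda>x. Y x - \<nu>) / (\<sigma> * t)\<^sup>2"
    using assms by (intro Chebyshev_inequality) auto
  then show ?thesis
    using assms normal_distributed_expectation[OF _ centered] normal_distributed_variance[OF _ centered]
    by (simp add: power_mult_distrib)
qed

section \<open>The CSBM as a measure\<close>

definition feature_space :: "nat \<Rightarrow> nat \<Rightarrow> (nat \<Rightarrow> nat \<Rightarrow> real) measure" where
  "feature_space n d = PiM {..<n} (\<lambda>_. PiM {..<d} (\<lambda>_. lborel))"

definition graph_space :: "nat \<Rightarrow> (nat \<times> nat \<Rightarrow> bool) measure" where
  "graph_space n = PiM {(i, j). i < j \<and> j < n} (\<lambda>_. count_space UNIV)"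

definition data_space :: "nat \<Rightarrow> nat \<Rightarrow> ((nat \<Rightarrow> nat \<Rightarrow> real) \<times> (nat \<times> nat \<Rightarrow> bool)) measure" where
  "data_space n d = feature_space n d \<Otimes>\<^sub>M graph_space n"

lemma sets_csbm_features: "sets (csbm_features n d \<mu> \<sigma> \<epsilon>) = sets (feature_space n d)"
  unfolding csbm_features_def feature_space_def by (intro sets_PiM_cong) simp_all

lemma prob_space_csbm_features: "\<sigma> > 0 \<Longrightarrow> prob_space (csbm_features n d \<mu> \<sigma> \<epsilon>)"
  unfolding csbm_features_def by (intro prob_space_PiM prob_space_normal_density)

lemma sets_csbm_graph: "sets (csbm_graph n p q \<epsilon>) = sets (graph_space n)"
  unfolding csbm_graph_def graph_space_def by (intro sets_PiM_cong) (simp_all split: prod.splits)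

lemma prob_space_csbm_graph: "prob_space (csbm_graph n p q \<epsilon>)"
  unfolding csbm_graph_def
  by (intro prob_space_PiM) (simp add: prob_space_measure_pmf split: prod.splits)

lemma finite_pairs_less: "finite {(i, j). i < j \<and> j < (n::nat)}"
  by (rule finite_subset[of _ "{..<n} \<times> {..<n}"]) auto

lemma finite_space_graph_space: "finite (space (graph_space n))"
  unfolding graph_space_def space_PiM using finite_pairs_less by (intro finite_PiE) auto

lemma singleton_sets_graph_space: "A \<in> space (graph_space n) \<Longrightarrow> {A} \<in> sets (graph_space n)"
proof -
  assume "A \<in> space (graph_space n)"
  then have "A \<in> extensional {(i, j). i < j \<and> j < n}"
    unfolding graph_space_def space_PiM by (simp add: PiE_iff)
  then have "{A} = PiE {(i, j). i < j \<and> j < n} (\<lambda>e. {A e})"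
    by (simp add: PiE_singleton)
  also have "\<dots> \<in> sets (graph_space n)"
    unfolding graph_space_def using finite_pairs_less by (intro sets_PiM_I_finite) auto
  finally show ?thesis .
qed

lemma CSBM_kernel_measurable:
  "\<sigma> > 0 \<Longrightarrow> (\<lambda>\<epsilon>. csbm_features n d \<mu> \<sigma> \<epsilon> \<Otimes>\<^sub>M csbm_graph n p q \<epsilon>)
     \<in> measurable (measure_pmf U) (subprob_algebra (data_space n d))"
  by (auto simp: space_subprob_algebra data_space_def sets_csbm_features sets_csbm_graph
      intro!: prob_space_imp_subprob_space prob_space_pair prob_space_csbm_features
        prob_space_csbm_graph sets_pair_measure_cong)

lemma prob_space_CSBM: "\<sigma> > 0 \<Longrightarrow> prob_space (CSBM n d \<mu> \<sigma> p q)"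
  unfolding CSBM_def
  by (intro measure_pmf.prob_space_bind[OF _ CSBM_kernel_measurable])
    (auto intro!: prob_space_pair prob_space_csbm_features prob_space_csbm_graph)

lemma sets_CSBM: "sets (CSBM n d \<mu> \<sigma> p q) = sets (data_space n d)"
  unfolding CSBM_def
  by (intro sets_bind) (auto simp: data_space_def sets_csbm_features sets_csbm_graph
      intro!: sets_pair_measure_cong)

lemma space_CSBM: "space (CSBM n d \<mu> \<sigma> p q) = space (data_space n d)"
  using sets_CSBM by (rule sets_eq_imp_space_eq)

lemma measure_CSBM_ge:
  assumes "\<sigma> > 0" "E \<in> sets (data_space n d)" "G \<in> sets (feature_space n d)"
    and "G \<times> space (graph_space n) \<subseteq> E"
    and "\<And>\<epsilon>. measure (csbm_features n d \<mu> \<sigma> \<epsilon>) G \<ge> 1 - \<eta>"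
  shows "measure (CSBM n d \<mu> \<sigma> p q) E \<ge> 1 - \<eta>"
proof -
  define U where "U = measure_pmf (pmf_of_set ({..<n} \<rightarrow>\<^sub>E (UNIV :: bool set)))"
  define K where "K = (\<lambda>\<epsilon>. csbm_features n d \<mu> \<sigma> \<epsilon> \<Otimes>\<^sub>M csbm_graph n p q \<epsilon>)"
  interpret CSBM: prob_space "CSBM n d \<mu> \<sigma> p q" using \<open>\<sigma> > 0\<close> by (rule prob_space_CSBM)
  have "ennreal (1 - \<eta>) \<le> emeasure (K \<epsilon>) E" for \<epsilon>
  proof -
    interpret F: prob_space "csbm_features n d \<mu> \<sigma> \<epsilon>"
      using \<open>\<sigma> > 0\<close> by (rule prob_space_csbm_features)
    interpret A: prob_space "csbm_graph n p q \<epsilon>" by (rule prob_space_csbm_graph)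
    have "space (csbm_graph n p q \<epsilon>) = space (graph_space n)"
      using sets_csbm_graph by (rule sets_eq_imp_space_eq)
    have "ennreal (1 - \<eta>) \<le> emeasure (csbm_features n d \<mu> \<sigma> \<epsilon>) G"
      using assms(5) by (simp add: F.emeasure_eq_measure ennreal_leI)
    also have "\<dots> = emeasure (K \<epsilon>) (G \<times> space (csbm_graph n p q \<epsilon>))"
      unfolding K_def using assms(3)
      by (simp add: A.emeasure_pair_measure_Times sets_csbm_features A.emeasure_space_1)
    also have "\<dots> \<le> emeasure (K \<epsilon>) E"
    proof (rule emeasure_mono)
      have "sets (K \<epsilon>) = sets (data_space n d)"
        unfolding K_def data_space_def
        by (intro sets_pair_measure_cong sets_csbm_features sets_csbm_graph)
      then show "E \<in> sets (K \<epsilon>)" using assms(2) by simp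
      show "G \<times> space (csbm_graph n p q \<epsilon>) \<subseteq> E"
        using assms(4) \<open>space (csbm_graph n p q \<epsilon>) = _\<close> by simp
    qed
    finally show ?thesis .
  qed
  then have "(\<integral>\<^sup>+\<epsilon>. ennreal (1 - \<eta>) \<partial>U) \<le> (\<integral>\<^sup>+\<epsilon>. emeasure (K \<epsilon>) E \<partial>U)"
    by (intro nn_integral_mono)
  also have "\<dots> = emeasure (CSBM n d \<mu> \<sigma> p q) E"
    unfolding CSBM_def U_def K_def
    by (rule emeasure_bind[symmetric, OF _ CSBM_kernel_measurable[OF \<open>\<sigma> > 0\<close>] assms(2)]) simp
  finally have "ennreal (1 - \<eta>) \<le> ennreal (measure (CSBM n d \<mu> \<sigma> p q) E)"
    by (simp add: U_def measure_pmf.emeasure_space_1 CSBM.emeasure_eq_measure)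
  then show ?thesis
    by simp
qed

lemma borel_measurable_PiM_lborel_component:
  "(\<lambda>x. x k :: real) \<in> borel_measurable (PiM I (\<lambda>_. lborel))"
proof (cases "k \<in> I")
  case True
  then show ?thesis
    using measurable_component_singleton[OF True, of "\<lambda>_. lborel"] by simp
next
  case False
  then have "x k = (undefined :: real)" if "x \<in> space (PiM I (\<lambda>_. lborel))" for x
    using that by (auto simp: space_PiM PiE_def extensional_def)
  then show ?thesis by (subst measurable_cong[where g = "\<lambda>_. undefined"]) auto
qed

lemma borel_measurable_feature_entry:
  "(\<lambda>X. X i k :: real) \<in> borel_measurable (feature_space n d)"
proof (cases "i < n")
  case True
  have "(\<lambda>X. X i) \<in> measurable (feature_space n d) (PiM {..<d} (\<lambda>_. lborel))"
    unfolding feature_space_def using True by (intro measurable_component_singleton) simp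
  then show ?thesis
    using borel_measurable_PiM_lborel_component by (rule measurable_compose)
next
  case False
  then have "X i = (undefined :: nat \<Rightarrow> real)" if "X \<in> space (feature_space n d)" for X
    using that by (auto simp: feature_space_def space_PiM PiE_def extensional_def)
  then show ?thesis by (subst measurable_cong[where g = "\<lambda>_. undefined k"]) auto
qed

lemma borel_measurable_inner_feature[measurable]:
  "(\<lambda>X. inner_d d' w (X i)) \<in> borel_measurable (feature_space n d)"
  unfolding inner_d_def by (intro borel_measurable_sum borel_measurable_times
      borel_measurable_const borel_measurable_feature_entry)

lemma sets_data_space_Collect:
  assumes "\<And>A. {X \<in> space (feature_space n d). P X A} \<in> sets (feature_space n d)"
  shows "{(X, A) \<in> space (data_space n d). P X A} \<in> sets (data_space n d)"
proof -
  have "{(X, A) \<in> space (data_space n d). P X A}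
      = (\<Union>A\<in>space (graph_space n). {X \<in> space (feature_space n d). P X A} \<times> {A})"
    unfolding data_space_def space_pair_measure by auto
  also have "\<dots> \<in> sets (data_space n d)"
    unfolding data_space_def
    by (intro sets.finite_UN finite_space_graph_space pair_measureI assms singleton_sets_graph_space)
  finally show ?thesis .
qed

definition well_separated :: "nat \<Rightarrow> nat \<Rightarrow> (nat \<Rightarrow> real) \<Rightarrow> real \<Rightarrow> real \<Rightarrow> (nat \<Rightarrow> nat \<Rightarrow> real) set"
  where "well_separated n d \<mu> \<delta> r = {X \<in> space (feature_space n d). \<forall>i<n.
    \<delta> \<le> \<bar>inner_d d (w_tilde d \<mu>) (X i)\<bar> \<and> \<bar>\<bar>inner_d d (w_tilde d \<mu>) (X i)\<bar> - vnorm d \<mu>\<bar> \<le> r}"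

lemma sets_well_separated: "well_separated n d \<mu> \<delta> r \<in> sets (feature_space n d)"
  unfolding well_separated_def by measurable

lemma csbm_features_row_outlier_le:
  fixes \<epsilon> :: "nat \<Rightarrow> bool"
  assumes "\<sigma> > 0" "\<exists>k<d. \<mu> k \<noteq> 0" "\<delta> > 0" "t > 0" "i < n"
  defines "a \<equiv> inner_d d (w_tilde d \<mu>)" and "s \<equiv> if \<epsilon> i then 1 else -1"
  shows "measure (csbm_features n d \<mu> \<sigma> \<epsilon>)
      {X \<in> space (csbm_features n d \<mu> \<sigma> \<epsilon>). \<bar>a (X i)\<bar> < \<delta> \<or> \<sigma> * t \<le> \<bar>a (X i) - s * vnorm d \<mu>\<bar>}
    \<le> 2 * \<delta> / \<sigma> + 1 / t\<^sup>2"
proof -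
  define F where "F = csbm_features n d \<mu> \<sigma> \<epsilon>"
  define row where "row = PiM {..<d} (\<lambda>k. density lborel (normal_density (s * \<mu> k) \<sigma>))"
  have F_eq: "F = PiM {..<n} (\<lambda>j. PiM {..<d}
      (\<lambda>k. density lborel (normal_density ((if \<epsilon> j then 1 else -1) * \<mu> k) \<sigma>)))"
    by (simp add: F_def csbm_features_def)
  interpret row: prob_space row
    unfolding row_def using \<open>\<sigma> > 0\<close> by (intro prob_space_PiM prob_space_normal_density)
  have row_law: "distributed row lborel a (normal_density (s * vnorm d \<mu>) \<sigma>)"
    unfolding row_def a_def using assms(1,2) by (rule distributed_inner_w_tilde)
  have [measurable]: "a \<in> borel_measurable row"
    using distributed_measurable[OF row_law] by simp
  define B where "B = {x \<in> space row. \<bar>a x\<bar> < \<delta> \<or> \<sigma> * t \<le> \<bar>a x - s * vnorm d \<mu>\<bar>}"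
  have "B \<in> sets row" unfolding B_def by measurable
  have component: "(\<lambda>X. X i) \<in> measurable F row"
    unfolding F_eq row_def s_def using \<open>i < n\<close> by (intro measurable_component_singleton) simp
  have "{X \<in> space F. \<bar>a (X i)\<bar> < \<delta> \<or> \<sigma> * t \<le> \<bar>a (X i) - s * vnorm d \<mu>\<bar>}
      = (\<lambda>X. X i) -` B \<inter> space F"
    using measurable_space[OF component] by (auto simp: B_def)
  also have "measure F \<dots> = measure (distr F row (\<lambda>X. X i)) B"
    using component \<open>B \<in> sets row\<close> by (rule measure_distr[symmetric])
  also have "distr F row (\<lambda>X. X i) = row"
    unfolding F_eq row_def s_def using assms(1,5)
    by (intro distr_PiM_component prob_space_PiM prob_space_normal_density) auto
  also have "B = {x \<in> space row. \<bar>a x\<bar> < \<delta>} \<union> {x \<in> space row. \<sigma> * t \<le> \<bar>a x - s * vnorm d \<mu>\<bar>}"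
    by (auto simp: B_def)
  also have "measure row \<dots> \<le> row.prob {x \<in> space row. \<bar>a x\<bar> < \<delta>}
      + row.prob {x \<in> space row. \<sigma> * t \<le> \<bar>a x - s * vnorm d \<mu>\<bar>}"
    by (intro measure_Un_le) measurable
  also have "\<dots> \<le> 2 * \<delta> / \<sigma> + 1 / t\<^sup>2"
    using row_law assms by (intro add_mono row.normal_prob_abs_less_le row.normal_prob_abs_diff_ge_le)
  finally show ?thesis unfolding F_def .
qed

lemma csbm_features_well_separated_ge:
  fixes \<epsilon> :: "nat \<Rightarrow> bool"
  assumes "\<sigma> > 0" "\<exists>k<d. \<mu> k \<noteq> 0" "\<delta> > 0" "t > 0"
  shows "measure (csbm_features n d \<mu> \<sigma> \<epsilon>) (well_separated n d \<mu> \<delta> (\<sigma> * t))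
    \<ge> 1 - n * (2 * \<delta> / \<sigma> + 1 / t\<^sup>2)"
proof -
  define F where "F = csbm_features n d \<mu> \<sigma> \<epsilon>"
  define a where "a = inner_d d (w_tilde d \<mu>)"
  define s where "s = (\<lambda>i. if \<epsilon> i then 1 else - 1 :: real)"
  define outlier where "outlier = (\<lambda>i. {X \<in> space F. \<bar>a (X i)\<bar> < \<delta> \<or> \<sigma> * t \<le> \<bar>a (X i) - s i * vnorm d \<mu>\<bar>})"
  interpret prob_space F unfolding F_def using \<open>\<sigma> > 0\<close> by (rule prob_space_csbm_features)
  have sets_F: "sets F = sets (feature_space n d)"
    unfolding F_def by (rule sets_csbm_features)
  have [measurable]: "(\<lambda>X. a (X i)) \<in> borel_measurable F" for i
    unfolding a_def measurable_cong_sets[OF sets_F refl] by measurable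
  have outlier_sets: "outlier i \<in> events" for i
    unfolding outlier_def by measurable
  have "space F - well_separated n d \<mu> \<delta> (\<sigma> * t) \<subseteq> (\<Union>i<n. outlier i)"
  proof
    fix X assume X: "X \<in> space F - well_separated n d \<mu> \<delta> (\<sigma> * t)"
    then obtain i where "i < n" and not_sep: "\<not> (\<delta> \<le> \<bar>a (X i)\<bar> \<and> \<bar>\<bar>a (X i)\<bar> - vnorm d \<mu>\<bar> \<le> \<sigma> * t)"
      by (auto simp: well_separated_def a_def sets_eq_imp_space_eq[OF sets_F])
    have "\<bar>\<bar>a (X i)\<bar> - vnorm d \<mu>\<bar> \<le> \<bar>a (X i) - s i * vnorm d \<mu>\<bar>"
      using vnorm_nonneg[of d \<mu>] by (simp add: s_def abs_if)
    then have "X \<in> outlier i"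
      using X not_sep by (auto simp: outlier_def)
    then show "X \<in> (\<Union>i<n. outlier i)"
      using \<open>i < n\<close> by blast
  qed
  then have "prob (space F - well_separated n d \<mu> \<delta> (\<sigma> * t)) \<le> prob (\<Union>i<n. outlier i)"
    using outlier_sets by (intro finite_measure_mono) auto
  also have "\<dots> \<le> (\<Sum>i<n. prob (outlier i))"
    using outlier_sets by (intro finite_measure_subadditive_finite) auto
  also have "\<dots> \<le> (\<Sum>i<n. 2 * \<delta> / \<sigma> + 1 / t\<^sup>2)"
    unfolding outlier_def F_def a_def s_def
    using assms by (intro sum_mono csbm_features_row_outlier_le) auto
  moreover have "prob (space F - well_separated n d \<mu> \<delta> (\<sigma> * t))
      = 1 - prob (well_separated n d \<mu> \<delta> (\<sigma> * t))"
    by (intro prob_compl) (simp add: sets_F sets_well_separated)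
  ultimately show ?thesis
    by (simp add: F_def)
qed

section \<open>Sign recovery\<close>

definition gat_recovers_signs ::
  "real \<Rightarrow> real \<Rightarrow> nat \<Rightarrow> nat \<Rightarrow> (nat \<Rightarrow> real) \<Rightarrow> (nat \<Rightarrow> nat \<Rightarrow> real) \<Rightarrow> (nat \<times> nat \<Rightarrow> bool) \<Rightarrow> bool"
  where "gat_recovers_signs \<beta> R n d \<mu> X A \<longleftrightarrow> (\<forall>i < n.
    (gat_out \<beta> R n d \<mu> X A i > 0 \<longleftrightarrow> inner_d d (w_tilde d \<mu>) (X i) > 0) \<and>
    (gat_out \<beta> R n d \<mu> X A i < 0 \<longleftrightarrow> inner_d d (w_tilde d \<mu>) (X i) < 0))"

lemma sets_gat_recovers_signs:
  "{(X, A) \<in> space (data_space n d). gat_recovers_signs \<beta> R n d \<mu> X A} \<in> sets (data_space n d)"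
  by (rule sets_data_space_Collect)
    (unfold gat_recovers_signs_def gat_out_eq attention_weight_def, measurable)

lemma le_mult_of_abs_diff_le:
  fixes x y m r \<delta> :: real
  assumes "0 < \<delta>" "\<delta> \<le> r" "\<delta> \<le> x" "\<bar>x - m\<bar> \<le> r" "\<bar>y - m\<bar> \<le> r"
  shows "y \<le> (3 * r / \<delta>) * x"
proof (cases "m \<ge> 2 * r")
  case True
  then have "y \<le> 3 * x" using assms by linarith
  also have "\<dots> \<le> (3 * r / \<delta>) * x"
    using assms by (intro mult_right_mono) (simp_all add: field_simps)
  finally show ?thesis .
next
  case False
  then have "y \<le> (3 * r / \<delta>) * \<delta>" using assms by simp
  also have "\<dots> \<le> (3 * r / \<delta>) * x"
    using assms by (intro mult_left_mono) auto
  finally show ?thesis .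
qed

lemma gat_recovers_signs_if_well_separated:
  assumes "X \<in> well_separated n d \<mu> \<delta> r" "R > 0" "\<beta> < 1" "0 < \<delta>" "\<delta> \<le> r"
    and "1 \<le> 2 * (R * (1 - \<beta>)) * \<delta>" "n * (3 * r / \<delta>) < exp (2 * (R * (1 - \<beta>)) * \<delta>)"
  shows "gat_recovers_signs \<beta> R n d \<mu> X A"
  unfolding gat_recovers_signs_def
proof (intro allI impI)
  fix i assume "i < n"
  define a where "a = (\<lambda>j. inner_d d (w_tilde d \<mu>) (X j))"
  have sep: "\<forall>j<n. \<delta> \<le> \<bar>a j\<bar> \<and> \<bar>\<bar>a j\<bar> - vnorm d \<mu>\<bar> \<le> r"
    using assms(1) by (simp add: well_separated_def a_def)
  have ratio: "\<forall>j<n. \<bar>a j\<bar> \<le> (3 * r / \<delta>) * \<bar>a i\<bar>"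
    using sep \<open>i < n\<close> assms(4,5) by (blast intro: le_mult_of_abs_diff_le[where m = "vnorm d \<mu>"])
  have "1 \<le> 3 * r / \<delta>" using assms(4,5) by (simp add: field_simps)
  have "sgn (gat_out \<beta> R n d \<mu> X A i) = sgn (a i)"
    unfolding a_def
    by (rule gat_out_sign[where C = "3 * r / \<delta>"])
      (use assms sep ratio \<open>i < n\<close> \<open>1 \<le> 3 * r / \<delta>\<close> in \<open>simp_all add: a_def\<close>)
  then show "(gat_out \<beta> R n d \<mu> X A i > 0 \<longleftrightarrow> a i > 0) \<and> (gat_out \<beta> R n d \<mu> X A i < 0 \<longleftrightarrow> a i < 0)"
    by (metis sgn_greater sgn_less)
qed

lemma one_le_ln_nat: "3 \<le> n \<Longrightarrow> 1 \<le> ln (real n)"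
  using exp_le by (subst ln_ge_iff) auto

lemma exp_cube_sqrt_ln_bounds:
  fixes \<kappa> :: real and n :: nat
  assumes "\<kappa> > 0" "n \<ge> 3" "(6 / \<kappa>)\<^sup>2 \<le> ln n"
  shows "1 \<le> \<kappa> * sqrt (ln n) ^ 3" and "n * (3 * n\<^sup>2 * sqrt (ln n)) < exp (\<kappa> * sqrt (ln n) ^ 3)"
proof -
  define L where "L = ln (real n)"
  define s where "s = sqrt L"
  have "1 \<le> L" unfolding L_def using \<open>n \<ge> 3\<close> by (rule one_le_ln_nat)
  then have "1 \<le> s" "s\<^sup>2 = L" by (simp_all add: s_def)
  have "s * 1 \<le> s * s" using \<open>1 \<le> s\<close> by (intro mult_left_mono) auto
  then have "s \<le> L" using \<open>s\<^sup>2 = L\<close> by (simp add: power2_eq_square)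
  have "(6 / \<kappa>)\<^sup>2 \<le> s\<^sup>2"
    using assms(3) by (simp only: \<open>s\<^sup>2 = L\<close> L_def)
  moreover have "0 \<le> s" using \<open>1 \<le> s\<close> by simp
  ultimately have "6 / \<kappa> \<le> s" by (rule power2_le_imp_le)
  then have "6 \<le> \<kappa> * s" using \<open>\<kappa> > 0\<close> by (simp add: field_simps)
  then have "6 * L \<le> (\<kappa> * s) * L"
    using \<open>1 \<le> L\<close> by (intro mult_right_mono) auto
  also have "(\<kappa> * s) * L = \<kappa> * s ^ 3"
    by (simp flip: \<open>s\<^sup>2 = L\<close> add: power2_eq_square power3_eq_cube)
  finally have big: "6 * L \<le> \<kappa> * s ^ 3" .
  then show "1 \<le> \<kappa> * sqrt (ln n) ^ 3"
    using \<open>1 \<le> L\<close> by (simp add: s_def L_def)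
  have "exp L = real n" using \<open>n \<ge> 3\<close> by (simp add: L_def)
  then have "n * (3 * n\<^sup>2 * s) = 3 * s * exp L ^ 3"
    by (simp add: power2_eq_square power3_eq_cube)
  also have "\<dots> = 3 * s * exp (3 * L)"
    by (simp flip: exp_of_nat_mult)
  also have "\<dots> < exp 2 * exp L * exp (3 * L)"
  proof -
    have "3 * s \<le> exp 2 * s"
      using exp_ge_add_one_self[of 2] \<open>1 \<le> s\<close> by (intro mult_right_mono) auto
    also have "\<dots> < exp 2 * exp L"
    proof -
      have "s < exp L" using \<open>s \<le> L\<close> exp_ge_add_one_self[of L] by linarith
      then show ?thesis by simp
    qed
    finally show ?thesis by simp
  qed
  also have "\<dots> \<le> exp (\<kappa> * s ^ 3)"
    using big \<open>1 \<le> L\<close> by (simp flip: exp_add)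
  finally show "n * (3 * n\<^sup>2 * sqrt (ln n)) < exp (\<kappa> * sqrt (ln n) ^ 3)"
    by (simp add: s_def L_def)
qed

lemma separation_scale_bounds:
  fixes \<sigma> R c :: real and n :: nat
  assumes "\<beta> < 1" "\<sigma> > 0" "c > 0" "n \<ge> 3"
    and "(6 / (2 * (1 - \<beta>) * c))\<^sup>2 \<le> ln n" "c * (n * (ln n)\<^sup>2 / \<sigma>) \<le> R"
  defines "\<delta> \<equiv> \<sigma> / (n * sqrt (ln n))"
  shows "R > 0" "0 < \<delta>" "\<delta> \<le> \<sigma> * n" "1 \<le> 2 * (R * (1 - \<beta>)) * \<delta>"
    and "n * (3 * (\<sigma> * n) / \<delta>) < exp (2 * (R * (1 - \<beta>)) * \<delta>)"
proof -
  define \<kappa> where "\<kappa> = 2 * (1 - \<beta>) * c"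
  define s where "s = sqrt (ln n)"
  have "\<kappa> > 0" using assms by (simp add: \<kappa>_def)
  have growth: "1 \<le> \<kappa> * s ^ 3" "n * (3 * n\<^sup>2 * s) < exp (\<kappa> * s ^ 3)"
    using exp_cube_sqrt_ln_bounds[OF \<open>\<kappa> > 0\<close> \<open>n \<ge> 3\<close>] assms(5) by (simp_all add: \<kappa>_def s_def)
  have "1 \<le> ln n" using \<open>n \<ge> 3\<close> by (rule one_le_ln_nat)
  then have "1 \<le> s" "ln n = s\<^sup>2" by (simp_all add: s_def)
  have "1 * 1 \<le> n * s" using \<open>1 \<le> s\<close> \<open>n \<ge> 3\<close> by (intro mult_mono) auto
  then have "0 < \<delta>" "\<delta> \<le> \<sigma>"
    using \<open>\<sigma> > 0\<close> by (simp_all add: \<delta>_def s_def divide_le_eq)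
  moreover have "\<sigma> \<le> \<sigma> * n" using \<open>\<sigma> > 0\<close> \<open>n \<ge> 3\<close> by simp
  ultimately show "0 < \<delta>" and "\<delta> \<le> \<sigma> * n" by linarith+
  have "0 < c * (n * (ln n)\<^sup>2 / \<sigma>)"
    using assms \<open>1 \<le> ln n\<close> by simp
  then show "R > 0" using assms by linarith
  have "\<kappa> * s ^ 3 = 2 * (1 - \<beta>) * (c * (n * (ln n)\<^sup>2 / \<sigma>)) * \<delta>"
    using \<open>1 \<le> s\<close> \<open>n \<ge> 3\<close> \<open>\<sigma> > 0\<close> unfolding \<open>ln n = s\<^sup>2\<close> \<kappa>_def \<delta>_def s_def[symmetric]
    by (simp add: field_simps eval_nat_numeral)
  also have "\<dots> \<le> 2 * (1 - \<beta>) * R * \<delta>"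
    using assms \<open>0 < \<delta>\<close> by (intro mult_right_mono mult_left_mono) auto
  also have "\<dots> = 2 * (R * (1 - \<beta>)) * \<delta>"
    by (simp add: mult_ac)
  finally have exponent: "\<kappa> * s ^ 3 \<le> 2 * (R * (1 - \<beta>)) * \<delta>" .
  then show "1 \<le> 2 * (R * (1 - \<beta>)) * \<delta>" using growth(1) by linarith
  have "n * (3 * (\<sigma> * n) / \<delta>) = n * (3 * n\<^sup>2 * s)"
    using \<open>\<sigma> > 0\<close> \<open>1 \<le> s\<close> by (simp add: \<delta>_def s_def power2_eq_square)
  then show "n * (3 * (\<sigma> * n) / \<delta>) < exp (2 * (R * (1 - \<beta>)) * \<delta>)"
    using growth(2) exponent by (simp add: order.strict_trans2)
qed

lemma CSBM_gat_recovers_signs_ge: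
  fixes \<mu> :: "nat \<Rightarrow> real" and \<sigma> R c :: real
  assumes "\<beta> < 1" "\<exists>k<d. \<mu> k \<noteq> 0" "\<sigma> > 0" "c > 0" "n \<ge> 3"
    and "(6 / (2 * (1 - \<beta>) * c))\<^sup>2 \<le> ln n" "c * (n * (ln n)\<^sup>2 / \<sigma>) \<le> R"
  shows "1 - (2 / sqrt (ln n) + 1 / n) \<le> measure (CSBM n d \<mu> \<sigma> p q)
    {(X, A) \<in> space (CSBM n d \<mu> \<sigma> p q). gat_recovers_signs \<beta> R n d \<mu> X A}"
proof -
  define \<delta> where "\<delta> = \<sigma> / (n * sqrt (ln n))"
  note scale = separation_scale_bounds[OF assms(1,3-7), folded \<delta>_def]
  have "1 - n * (2 * \<delta> / \<sigma> + 1 / (real n)\<^sup>2) \<le> measure (CSBM n d \<mu> \<sigma> p q)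
      {(X, A) \<in> space (data_space n d). gat_recovers_signs \<beta> R n d \<mu> X A}"
  proof (rule measure_CSBM_ge)
    show "well_separated n d \<mu> \<delta> (\<sigma> * n) \<times> space (graph_space n)
        \<subseteq> {(X, A) \<in> space (data_space n d). gat_recovers_signs \<beta> R n d \<mu> X A}"
      using gat_recovers_signs_if_well_separated[OF _ scale(1) \<open>\<beta> < 1\<close> scale(2,3,4,5)]
      by (auto simp: data_space_def space_pair_measure well_separated_def)
    show "1 - n * (2 * \<delta> / \<sigma> + 1 / (real n)\<^sup>2)
        \<le> measure (csbm_features n d \<mu> \<sigma> \<epsilon>) (well_separated n d \<mu> \<delta> (\<sigma> * n))" for \<epsilon>
      using assms scale(2) by (intro csbm_features_well_separated_ge) auto
  qed (use assms in \<open>simp_all add: sets_gat_recovers_signs sets_well_separated\<close>)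
  moreover have "n * (2 * \<delta> / \<sigma> + 1 / (real n)\<^sup>2) = 2 / sqrt (ln n) + 1 / n"
    using \<open>\<sigma> > 0\<close> \<open>n \<ge> 3\<close> one_le_ln_nat[OF \<open>n \<ge> 3\<close>]
    by (simp add: \<delta>_def field_simps power2_eq_square)
  ultimately show ?thesis by (simp add: space_CSBM)
qed

theorem theorem13:
  fixes d :: "nat \<Rightarrow> nat" and \<mu> :: "nat \<Rightarrow> nat \<Rightarrow> real"
    and \<sigma> p q R :: "nat \<Rightarrow> real" and \<beta> :: real
  assumes beta: "0 \<le> \<beta>" "\<beta> < 1"
    and mu_nz: "\<And>n. \<exists>k < d n. \<mu> n k \<noteq> 0"
    and sigma_pos: "\<And>n. \<sigma> n > 0"
    and p_prob: "\<And>n. 0 \<le> p n \<and> p n \<le> 1"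
    and q_prob: "\<And>n. 0 \<le> q n \<and> q n \<le> 1"
    and R_large: "\<exists>c > 0. eventually (\<lambda>n. R n \<ge> c * (real n * (ln (real n))\<^sup>2 / \<sigma> n)) sequentially"
  shows "(\<lambda>n. measure (CSBM n (d n) (\<mu> n) (\<sigma> n) (p n) (q n))
            {(X, A) \<in> space (CSBM n (d n) (\<mu> n) (\<sigma> n) (p n) (q n)).
              \<forall>i < n.
                (gat_out \<beta> (R n) n (d n) (\<mu> n) X A i > 0
                   \<longleftrightarrow> inner_d (d n) (w_tilde (d n) (\<mu> n)) (X i) > 0) \<and>
                (gat_out \<beta> (R n) n (d n) (\<mu> n) X A i < 0
                   \<longleftrightarrow> inner_d (d n) (w_tilde (d n) (\<mu> n)) (X i) < 0)})
         \<longlonglongrightarrow> 1"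
proof -
  obtain c where "c > 0" and R_ev: "eventually (\<lambda>n. c * (n * (ln n)\<^sup>2 / \<sigma> n) \<le> R n) sequentially"
    using R_large by blast
  define P where "P = (\<lambda>n. measure (CSBM n (d n) (\<mu> n) (\<sigma> n) (p n) (q n))
    {(X, A) \<in> space (CSBM n (d n) (\<mu> n) (\<sigma> n) (p n) (q n)). gat_recovers_signs \<beta> (R n) n (d n) (\<mu> n) X A})"
  have "filterlim (\<lambda>n::nat. ln (real n)) at_top sequentially" by real_asymp
  then have "eventually (\<lambda>n. (6 / (2 * (1 - \<beta>) * c))\<^sup>2 \<le> ln (real n)) sequentially"
    by (simp add: filterlim_at_top)
  then have lower: "eventually (\<lambda>n. 1 - (2 / sqrt (ln n) + 1 / n) \<le> P n) sequentially"
    using R_ev eventually_ge_at_top[of 3]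
  proof eventually_elim
    case (elim n)
    show ?case
      unfolding P_def
      by (rule CSBM_gat_recovers_signs_ge[OF beta(2) mu_nz sigma_pos \<open>c > 0\<close> elim(3) elim(1) elim(2)])
  qed
  have upper: "eventually (\<lambda>n. P n \<le> 1) sequentially"
    using prob_space.prob_le_1[OF prob_space_CSBM[OF sigma_pos]] by (simp add: P_def)
  have "(\<lambda>n::nat. 1 - (2 / sqrt (ln n) + 1 / n)) \<longlonglongrightarrow> 1" by real_asymp
  from tendsto_sandwich[OF lower upper this tendsto_const] have "P \<longlonglongrightarrow> 1" .
  then show ?thesis
    unfolding P_def gat_recovers_signs_def .
qed

end
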